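(* Let $T$ be a c.n.u. contraction on $H$ and let $(H_+,H_-,\Gamma_+,\Gamma_-)$ be a boundary quadruple for $A_T^{\perp_s}$ with contractive Weyl function $B$. Let $a=(x,y)\in A_T^{\perp_s}\subseteq\mathbb{H}$. Then for $\lambda\in\mathbb{D}_+$, $$\lambda f_{\hat x}(\lambda)-f_{\hat y}(\lambda)=B(\lambda)\Gamma_+a-\Gamma_-a,$$ and for $\lambda\in\mathbb{D}_-$, $$f_{\hat x}(\lambda)-\lambda f_{\hat y}(\lambda)=\Gamma_+a-B(\bar\lambda)^*\Gamma_-a.$$
   Context: $H$ is an infinite-dimensional separable complex Hilbert space with inner product $(\cdot,\cdot)_H$; $T\in\mathbb{B}(H)$, $\|T\|\le1$, is completely non-unitary. $\mathbb{K}=\ker(I-T^*T)$. $\mathbb{H}=H\oplus_\perp H$ with $[(x_1,x_2),(y_1,y_2)]=i(x_1,y_1)_H-i(x_2,y_2)_H$; $S^{\perp_s}=\{a:[a,b]=0\ \forall b\in S\}$; $A_T=\{(x,Tx):x\in\mathbb{K}\}$. $\mathbb{D}_\pm$ are two copies of the open unit disc; for $\lambda\in\mathbb{D}_\pm$, $\bar\lambda$ is regarded as a point of $\mathbb{D}_\mp$. $N_\lambda=\{(x,\lambda x)\}\cap A_T^{\perp_s}$ ($\lambda\in\mathbb{D}_+$), $N_\lambda=\{(\lambda x,x)\}\cap A_T^{\perp_s}$ ($\lambda\in\mathbb{D}_-$). A boundary quadruple: Hilbert spaces $H_\pm$, linear $\Gamma_\pm:A_T^{\perp_s}\to H_\pm$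 with $(\Gamma_+,\Gamma_-)$ bounded, onto $H_+\oplus_\perp H_-$, kernel $A_T$, and $[a,b]=i(\Gamma_+a,\Gamma_+b)-i(\Gamma_-a,\Gamma_-b)$. Contractive Weyl function: for $\lambda\in\mathbb{D}_+$, $\Gamma_+|_{N_\lambda}$ is bijective onto $H_+$ and $\Gamma_-a=B(\lambda)\Gamma_+a$ on $N_\lambda$ with $B(\lambda)\in\mathbb{B}(H_+,H_-)$, $\|B(\lambda)\|<1$; for $\lambda\in\mathbb{D}_-$, $\Gamma_-|_{N_\lambda}$ is bijective onto $H_-$ and $\Gamma_+a=B(\bar\lambda)^*\Gamma_-a$ on $N_\lambda$. $\gamma_+(\lambda)x\in N_\lambda$ with $\Gamma_+\gamma_+(\lambda)x=x$ ($\lambda\in\mathbb{D}_+$), $\gamma_-(\lambda)x\in N_\lambda$ with $\Gamma_-\gamma_-(\lambda)x=x$ ($\lambda\in\mathbb{D}_-$); $\varphi_+=pr_1\circ\gamma_+$, $\varphi_-=pr_2\circ\gamma_-$. $E_\lambda=pr_1(N_\lambda)$ ($\lambda\in\mathbb{D}_+$), $E_\lambda=pr_2(N_\lambda)$ ($\lambda\in\mathbb{D}_-$), $F^\dagger_\lambda=E_{\bar\lambda}$, $F_\lambda$ its conjugate-linear dual with pairing $((\cdot,\cdot))$. For $x\in H$, $\hat x(\lambda)\in F_\lambda$ is $\omega\mapsto(x,\omega)_H$. For $\lambda\in\mathbb{D}_+$, $\varphi_-^\dagger(\lambda):F_\lambda\to H_-$ is defined by $(\varphi_-^\dagger(\lambda)\omega,z)_{H_-}=((\omega,\varphi_-(\bar\lambda)z))$;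 for $\lambda\in\mathbb{D}_-$, $\varphi_+^\dagger(\lambda):F_\lambda\to H_+$ by $(\varphi_+^\dagger(\lambda)\omega,z)_{H_+}=((\omega,\varphi_+(\bar\lambda)z))$. For a section $s$, $f_s(\lambda)=\varphi_-^\dagger(\lambda)s(\lambda)$ ($\lambda\in\mathbb{D}_+$) and $f_s(\lambda)=\varphi_+^\dagger(\lambda)s(\lambda)$ ($\lambda\in\mathbb{D}_-$). *)

theory Defs
  imports "HOL-Analysis.Analysis"
begin

class cinner_space = ab_group_add +
  fixes cscale :: "complex \<Rightarrow> 'a \<Rightarrow> 'a"  (infixr \<open>*\<^sub>C\<close> 75)
    and cinner :: "'a \<Rightarrow> 'a \<Rightarrow> complex"
  assumes cscale_add_right: "a *\<^sub>C (x + y) = a *\<^sub>C x + a *\<^sub>C y"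
    and cscale_add_left: "(a + b) *\<^sub>C x = a *\<^sub>C x + b *\<^sub>C x"
    and cscale_cscale: "a *\<^sub>C (b *\<^sub>C x) = (a * b) *\<^sub>C x"
    and cscale_one: "1 *\<^sub>C x = x"
    and cinner_add_left: "cinner (x + y) z = cinner x z + cinner y z"
    and cinner_cscale_left: "cinner (a *\<^sub>C x) y = a * cinner x y"
    and cinner_commute: "cinner y x = cnj (cinner x y)"
    and cinner_ge_zero: "0 \<le> Re (cinner x x)"
    and cinner_eq_zero: "cinner x x = 0 \<Longrightarrow> x = 0"

definition cnorm :: "'a::cinner_space \<Rightarrow> real" where
  "cnorm x = sqrt (Re (cinner x x))"

class chilbert = cinner_space +
  assumes cinner_complete:
    "(\<forall>e>0. \<exists>N. \<forall>m\<ge>N. \<forall>n\<ge>N. sqrt (Re (cinner (X m - X n) (X m - X n))) < e)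
      \<Longrightarrow> \<exists>L. (\<lambda>n. sqrt (Re (cinner (X n - L) (X n - L)))) \<longlonglongrightarrow> 0"

definition separable_space :: "'a::cinner_space itself \<Rightarrow> bool" where
  "separable_space _ \<longleftrightarrow>
     (\<exists>D::'a set. countable D \<and> (\<forall>x. \<forall>e>0. \<exists>d\<in>D. cnorm (x - d) < e))"

definition infinite_dimensional :: "'a::cinner_space itself \<Rightarrow> bool" where
  "infinite_dimensional _ \<longleftrightarrow>
     (\<forall>F::'a set. finite F \<longrightarrow> (\<exists>x. \<forall>c. x \<noteq> (\<Sum>f\<in>F. c f *\<^sub>C f)))"

definition clinear :: "('a::cinner_space \<Rightarrow> 'b::cinner_space) \<Rightarrow> bool" where
  "clinear f \<longleftrightarrow> (\<forall>x y. f (x + y) = f x + f y) \<and> (\<forall>c x. f (c *\<^sub>C x) = c *\<^sub>C f x)"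

definition cbounded_linear :: "('a::cinner_space \<Rightarrow> 'b::cinner_space) \<Rightarrow> bool" where
  "cbounded_linear f \<longleftrightarrow> clinear f \<and> (\<exists>K. \<forall>x. cnorm (f x) \<le> K * cnorm x)"

definition ccontraction :: "('a::cinner_space \<Rightarrow> 'b::cinner_space) \<Rightarrow> bool" where
  "ccontraction f \<longleftrightarrow> cbounded_linear f \<and> (\<forall>x. cnorm (f x) \<le> cnorm x)"

definition cstrict_contraction :: "('a::cinner_space \<Rightarrow> 'b::cinner_space) \<Rightarrow> bool" where
  "cstrict_contraction f \<longleftrightarrow> cbounded_linear f \<and> (\<exists>c<1. \<forall>x. cnorm (f x) \<le> c * cnorm x)"

definition cadj :: "('a::cinner_space \<Rightarrow> 'b::cinner_space) \<Rightarrow> ('b \<Rightarrow> 'a)" where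
  "cadj T = (THE S. \<forall>x y. cinner (T x) y = cinner x (S y))"

definition closed_csubspace :: "'a::cinner_space set \<Rightarrow> bool" where
  "closed_csubspace M \<longleftrightarrow> 0 \<in> M \<and> (\<forall>x\<in>M. \<forall>y\<in>M. x + y \<in> M) \<and> (\<forall>c. \<forall>x\<in>M. c *\<^sub>C x \<in> M)
     \<and> (\<forall>X L. (\<forall>n. X n \<in> M) \<and> (\<lambda>n. cnorm (X n - L)) \<longlonglongrightarrow> 0 \<longrightarrow> L \<in> M)"

definition completely_non_unitary :: "('a::cinner_space \<Rightarrow> 'a) \<Rightarrow> bool" where
  "completely_non_unitary T \<longleftrightarrow>
     (\<forall>M. closed_csubspace M \<and> T ` M \<subseteq> M \<and> cadj T ` M \<subseteq> M
          \<and> (\<forall>x\<in>M. cadj T (T x) = x \<and> T (cadj T x) = x) \<longrightarrow> M = {0})"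

definition kform :: "'h::cinner_space \<times> 'h \<Rightarrow> 'h \<times> 'h \<Rightarrow> complex" where
  "kform a b = \<i> * cinner (fst a) (fst b) - \<i> * cinner (snd a) (snd b)"

definition padd :: "'h::cinner_space \<times> 'h \<Rightarrow> 'h \<times> 'h \<Rightarrow> 'h \<times> 'h" where
  "padd a b = (fst a + fst b, snd a + snd b)"

definition pscale :: "complex \<Rightarrow> 'h::cinner_space \<times> 'h \<Rightarrow> 'h \<times> 'h" where
  "pscale c a = (c *\<^sub>C fst a, c *\<^sub>C snd a)"

definition kperp :: "('h::cinner_space \<times> 'h) set \<Rightarrow> ('h \<times> 'h) set" where
  "kperp S = {a. \<forall>b\<in>S. kform a b = 0}"

definition defect_kernel :: "('h::cinner_space \<Rightarrow> 'h) \<Rightarrow> 'h set" where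
  "defect_kernel T = {x. x - cadj T (T x) = 0}"

definition A_rel :: "('h::cinner_space \<Rightarrow> 'h) \<Rightarrow> ('h \<times> 'h) set" where
  "A_rel T = {(x, T x) | x. x \<in> defect_kernel T}"

text \<open>Points of the two discs \<open>\<bbbD>\<^sub>\<pm>\<close> are represented by complex numbers of modulus
  less than 1; separate constants are used for the \<open>+\<close> and \<open>-\<close> copies.\<close>

definition N_plus :: "('h::cinner_space \<Rightarrow> 'h) \<Rightarrow> complex \<Rightarrow> ('h \<times> 'h) set" where
  "N_plus T lam = {(x, lam *\<^sub>C x) | x. True} \<inter> kperp (A_rel T)"

definition N_minus :: "('h::cinner_space \<Rightarrow> 'h) \<Rightarrow> complex \<Rightarrow> ('h \<times> 'h) set" where
  "N_minus T lam = {(lam *\<^sub>C x, x) | x. True} \<inter> kperp (A_rel T)"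

definition boundary_quadruple ::
  "('h::cinner_space \<Rightarrow> 'h) \<Rightarrow> ('h \<times> 'h \<Rightarrow> 'p::cinner_space) \<Rightarrow> ('h \<times> 'h \<Rightarrow> 'm::cinner_space) \<Rightarrow> bool" where
  "boundary_quadruple T Gp Gm \<longleftrightarrow>
     (\<forall>a\<in>kperp (A_rel T). \<forall>b\<in>kperp (A_rel T).
         Gp (padd a b) = Gp a + Gp b \<and> Gm (padd a b) = Gm a + Gm b) \<and>
     (\<forall>c. \<forall>a\<in>kperp (A_rel T). Gp (pscale c a) = c *\<^sub>C Gp a \<and> Gm (pscale c a) = c *\<^sub>C Gm a) \<and>
     (\<exists>C. \<forall>a\<in>kperp (A_rel T).
         (cnorm (Gp a))\<^sup>2 + (cnorm (Gm a))\<^sup>2 \<le> C * ((cnorm (fst a))\<^sup>2 + (cnorm (snd a))\<^sup>2)) \<and>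
     (\<forall>u v. \<exists>a\<in>kperp (A_rel T). Gp a = u \<and> Gm a = v) \<and>
     {a\<in>kperp (A_rel T). Gp a = 0 \<and> Gm a = 0} = A_rel T \<and>
     (\<forall>a\<in>kperp (A_rel T). \<forall>b\<in>kperp (A_rel T).
         kform a b = \<i> * cinner (Gp a) (Gp b) - \<i> * cinner (Gm a) (Gm b))"

definition contractive_weyl_function ::
  "('h::cinner_space \<Rightarrow> 'h) \<Rightarrow> ('h \<times> 'h \<Rightarrow> 'p::cinner_space) \<Rightarrow> ('h \<times> 'h \<Rightarrow> 'm::cinner_space)
     \<Rightarrow> (complex \<Rightarrow> 'p \<Rightarrow> 'm) \<Rightarrow> bool" where
  "contractive_weyl_function T Gp Gm B \<longleftrightarrow>
     (\<forall>lam. cmod lam < 1 \<longrightarrow>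
        bij_betw Gp (N_plus T lam) UNIV \<and> cstrict_contraction (B lam) \<and>
        (\<forall>a\<in>N_plus T lam. Gm a = B lam (Gp a))) \<and>
     (\<forall>lam. cmod lam < 1 \<longrightarrow>
        bij_betw Gm (N_minus T lam) UNIV \<and>
        (\<forall>a\<in>N_minus T lam. Gp a = cadj (B (cnj lam)) (Gm a)))"

definition gamma_plus :: "('h::cinner_space \<Rightarrow> 'h) \<Rightarrow> ('h \<times> 'h \<Rightarrow> 'p::cinner_space)
     \<Rightarrow> complex \<Rightarrow> 'p \<Rightarrow> 'h \<times> 'h" where
  "gamma_plus T Gp lam u = (THE a. a \<in> N_plus T lam \<and> Gp a = u)"

definition gamma_minus :: "('h::cinner_space \<Rightarrow> 'h) \<Rightarrow> ('h \<times> 'h \<Rightarrow> 'm::cinner_space)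
     \<Rightarrow> complex \<Rightarrow> 'm \<Rightarrow> 'h \<times> 'h" where
  "gamma_minus T Gm lam u = (THE a. a \<in> N_minus T lam \<and> Gm a = u)"

definition phi_plus where "phi_plus T Gp lam u = fst (gamma_plus T Gp lam u)"
definition phi_minus where "phi_minus T Gm lam u = snd (gamma_minus T Gm lam u)"

text \<open>Elements \<open>\<omega>\<close> of the conjugate-linear dual \<open>F\<^sub>\<lambda>\<close> of \<open>F\<^sup>\<dagger>\<^sub>\<lambda> = E\<^sub>\<bar>\<lambda>\<close> are represented
  by functions \<open>'h \<Rightarrow> complex\<close> (only their values on \<open>E\<^sub>\<bar>\<lambda>\<close> matter); the pairing is
  \<open>((\<omega>, e)) = \<omega> e\<close>. A section is a map from the disc to such functionals.\<close>

definition hat :: "'h::cinner_space \<Rightarrow> complex \<Rightarrow> ('h \<Rightarrow> complex)" where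
  "hat x lam = (\<lambda>w. cinner x w)"

definition phi_minus_dag :: "('h::cinner_space \<Rightarrow> 'h) \<Rightarrow> ('h \<times> 'h \<Rightarrow> 'm::cinner_space)
     \<Rightarrow> complex \<Rightarrow> ('h \<Rightarrow> complex) \<Rightarrow> 'm" where
  "phi_minus_dag T Gm lam \<omega> = (THE v. \<forall>z. cinner v z = \<omega> (phi_minus T Gm (cnj lam) z))"

definition phi_plus_dag :: "('h::cinner_space \<Rightarrow> 'h) \<Rightarrow> ('h \<times> 'h \<Rightarrow> 'p::cinner_space)
     \<Rightarrow> complex \<Rightarrow> ('h \<Rightarrow> complex) \<Rightarrow> 'p" where
  "phi_plus_dag T Gp lam \<omega> = (THE v. \<forall>z. cinner v z = \<omega> (phi_plus T Gp (cnj lam) z))"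

definition f_sec_plus where "f_sec_plus T Gm s lam = phi_minus_dag T Gm lam (s lam)"
definition f_sec_minus where "f_sec_minus T Gp s lam = phi_plus_dag T Gp lam (s lam)"

end

theory Submission
  imports Defs
begin

text \<open>
  Both identities are Green's identity \<open>[a, b] = i(\<Gamma>\<^sub>+a, \<Gamma>\<^sub>+b) - i(\<Gamma>\<^sub>-a, \<Gamma>\<^sub>-b)\<close>
  for \<open>a = (x, y)\<close> and the defect vector \<open>b = \<gamma>\<^sub>\<mp>(cnj \<lambda>) z\<close>. As \<open>f\<^sub>s(\<lambda>)\<close> for
  \<open>s = x\<^sup>^\<close> is the Riesz representer of \<open>z \<mapsto> (x, \<phi>\<^sub>\<mp>(cnj \<lambda>) z)\<close>, pairing the
  left-hand side with \<open>z\<close> gives \<open>[a, b] / i\<close>; on the defect space one boundary value of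
  \<open>b\<close> is \<open>z\<close> and the other is given by the Weyl function, which yields the right-hand side.
  Riesz representation applies, both here and for the adjoint \<open>B(\<lambda>)\<^sup>*\<close>, because Green's
  identity on \<open>N\<^sub>\<mu>\<close> gives \<open>(1 - |\<mu>|\<^sup>2) \<parallel>\<phi>\<^sub>\<pm>(\<mu>) u\<parallel>\<^sup>2 \<le> \<parallel>u\<parallel>\<^sup>2\<close>, so \<open>\<phi>\<^sub>\<pm>(\<mu>)\<close> is
  bounded.
\<close>

section \<open>Complex inner product spaces\<close>

lemma cscale_zero_left [simp]: "(0::complex) *\<^sub>C (x::'a::cinner_space) = 0"
  by (metis add_cancel_right_left cscale_add_left)

lemma cscale_zero_right [simp]: "c *\<^sub>C (0::'a::cinner_space) = 0"
  by (metis add_cancel_right_left cscale_add_right)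

lemma cinner_zero_left [simp]: "cinner (0::'a::cinner_space) y = 0"
  by (metis cinner_cscale_left cscale_zero_left mult_zero_left)

lemma cinner_zero_right [simp]: "cinner (y::'a::cinner_space) 0 = 0"
  by (metis cinner_commute cinner_zero_left complex_cnj_zero)

lemma cinner_add_right: "cinner (x::'a::cinner_space) (y + z) = cinner x y + cinner x z"
  by (metis cinner_add_left cinner_commute complex_cnj_add)

lemma cinner_cscale_right: "cinner (x::'a::cinner_space) (c *\<^sub>C y) = cnj c * cinner x y"
  by (metis cinner_commute cinner_cscale_left complex_cnj_mult)

lemma cinner_minus_left: "cinner (- (x::'a::cinner_space)) y = - cinner x y"
  by (metis cinner_add_left cinner_zero_left eq_neg_iff_add_eq_0)

lemma cinner_minus_right: "cinner (x::'a::cinner_space) (- y) = - cinner x y"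
  by (metis cinner_add_right cinner_zero_right eq_neg_iff_add_eq_0)

lemma cinner_diff_left: "cinner ((x::'a::cinner_space) - y) z = cinner x z - cinner y z"
  by (simp only: diff_conv_add_uminus cinner_add_left cinner_minus_left)

lemma cinner_diff_right: "cinner (x::'a::cinner_space) (y - z) = cinner x y - cinner x z"
  by (simp only: diff_conv_add_uminus cinner_add_right cinner_minus_right)

lemmas cinner_simps =
  cinner_add_left cinner_add_right cinner_diff_left cinner_diff_right
  cinner_cscale_left cinner_cscale_right

lemma cnorm_power2: "(cnorm x)\<^sup>2 = Re (cinner (x::'a::cinner_space) x)"
  by (simp add: cnorm_def cinner_ge_zero)

lemma cinner_self_eq_cnorm_sq: "cinner (x::'a::cinner_space) x = complex_of_real ((cnorm x)\<^sup>2)"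
proof -
  have "Im (cinner x x) = 0"
    using arg_cong[OF cinner_commute[of x x], of Im] by simp
  then show ?thesis
    by (simp add: cnorm_power2 complex_eq_iff)
qed

lemma cnorm_nonneg: "0 \<le> cnorm (x::'a::cinner_space)"
  by (simp add: cnorm_def cinner_ge_zero)

lemma cnorm_eq_0_iff [simp]: "cnorm (x::'a::cinner_space) = 0 \<longleftrightarrow> x = 0"
  using cinner_self_eq_cnorm_sq[of x] cinner_eq_zero[of x] by auto

lemma cnorm_minus_commute: "cnorm (x - y) = cnorm (y - (x::'a::cinner_space))"
  by (metis cnorm_def cinner_minus_left cinner_minus_right minus_diff_eq minus_minus)

lemma cnorm_cscale: "cnorm (c *\<^sub>C x) = cmod c * cnorm (x::'a::cinner_space)"
proof -
  have "cinner (c *\<^sub>C x) (c *\<^sub>C x) = complex_of_real ((cmod c)\<^sup>2 * (cnorm x)\<^sup>2)"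
    by (simp add: cinner_cscale_left cinner_cscale_right cinner_self_eq_cnorm_sq[of x]
        mult.commute[of "cnj c"] flip: complex_norm_square)
  then have "(cnorm (c *\<^sub>C x))\<^sup>2 = (cmod c * cnorm x)\<^sup>2"
    by (simp add: cnorm_power2 power_mult_distrib)
  then show ?thesis
    by (simp add: cnorm_nonneg power2_eq_iff_nonneg)
qed

lemma cinner_ext:
  assumes "\<And>z. cinner (u::'a::cinner_space) z = cinner v z"
  shows "u = v"
proof -
  have "cinner (u - v) (u - v) = 0"
    using assms by (simp add: cinner_diff_left)
  then show ?thesis
    using cinner_eq_zero[of "u - v"] by simp
qed

lemma cauchy_schwarz: "cmod (cinner x y) \<le> cnorm x * cnorm (y::'a::cinner_space)"
proof (cases "y = 0")
  case True
  then show ?thesis by (simp add: cnorm_def)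
next
  case False
  define r c where "r = (cnorm y)\<^sup>2" and "c = cinner x y"
  have r: "r > 0"
    using False cnorm_nonneg[of y] by (simp add: r_def)
  define t where "t = c / complex_of_real r"
  \<comment> \<open>Expand \<open>0 \<le> \<parallel>x - t y\<parallel>\<^sup>2\<close> with \<open>t\<close> the coefficient of the projection onto \<open>y\<close>.\<close>
  have "cinner (x - t *\<^sub>C y) (x - t *\<^sub>C y) = cinner x x - c * cnj c / complex_of_real r"
    using r by (simp add: cinner_simps cinner_self_eq_cnorm_sq[of y] r_def[symmetric]
        c_def[symmetric] cinner_commute[of y x] t_def field_simps)
  also have "\<dots> = complex_of_real ((cnorm x)\<^sup>2 - (cmod c)\<^sup>2 / r)"
    by (simp add: cinner_self_eq_cnorm_sq mult.commute[of "cnj c"] flip: complex_norm_square)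
  finally have "(cmod c)\<^sup>2 \<le> (cnorm x)\<^sup>2 * r"
    using cinner_ge_zero[of "x - t *\<^sub>C y"] r by (simp add: divide_le_eq)
  then have "(cmod c)\<^sup>2 \<le> (cnorm x * cnorm y)\<^sup>2"
    by (simp add: r_def power_mult_distrib)
  then show ?thesis
    unfolding c_def by (rule power2_le_imp_le) (simp add: cnorm_nonneg)
qed

lemma cnorm_triangle: "cnorm (x + y) \<le> cnorm x + cnorm (y::'a::cinner_space)"
proof -
  have "Re (cinner x y) \<le> cnorm x * cnorm y"
    using cauchy_schwarz[of x y] complex_Re_le_cmod order_trans by blast
  moreover have "(cnorm (x + y))\<^sup>2 = (cnorm x)\<^sup>2 + (cnorm y)\<^sup>2 + 2 * Re (cinner x y)"
    by (simp add: cnorm_power2 cinner_simps cinner_commute[of y x])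
  ultimately have "(cnorm (x + y))\<^sup>2 \<le> (cnorm x + cnorm y)\<^sup>2"
    by (simp add: power2_sum)
  then show ?thesis
    by (rule power2_le_imp_le) (simp add: cnorm_nonneg add_nonneg_nonneg)
qed

lemma parallelogram:
  "(cnorm (a - b))\<^sup>2 + (cnorm (a + b))\<^sup>2 = 2 * (cnorm a)\<^sup>2 + 2 * (cnorm (b::'a::cinner_space))\<^sup>2"
  by (simp add: cnorm_power2 cinner_simps)

lemma le_divide_sqrt_if_mult_power2_le:
  fixes a b d :: real
  assumes "0 < d" "0 \<le> b" "d * a\<^sup>2 \<le> b\<^sup>2"
  shows "a \<le> b / sqrt d"
proof -
  have "a * sqrt d \<le> \<bar>a\<bar> * sqrt d"
    using assms(1) by (intro mult_right_mono) simp_all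
  also have "\<dots> \<le> b"
    using real_sqrt_le_mono[OF assms(3)] assms(2) by (simp add: real_sqrt_mult mult.commute)
  finally show ?thesis
    using assms(1) by (simp add: le_divide_eq)
qed

section \<open>Riesz representation\<close>

lemma cnorm_le_cnorm_add_cscale_imp_orthogonal:
  assumes "\<And>t. cnorm L \<le> cnorm (L + t *\<^sub>C (k::'a::cinner_space))"
  shows "cinner k L = 0"
proof (cases "k = 0")
  case True
  then show ?thesis by simp
next
  case False
  define r c where "r = (cnorm k)\<^sup>2" and "c = cinner k L"
  have r: "r > 0"
    using False cnorm_nonneg[of k] by (simp add: r_def)
  define t where "t = - cnj c / complex_of_real r"
  have "cinner (L + t *\<^sub>C k) (L + t *\<^sub>C k) = cinner L L - c * cnj c / complex_of_real r"
    using r by (simp add: cinner_simps cinner_self_eq_cnorm_sq[of k] r_def[symmetric]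
        c_def[symmetric] cinner_commute[of L k] t_def field_simps)
  then have "(cnorm (L + t *\<^sub>C k))\<^sup>2 = (cnorm L)\<^sup>2 - (cmod c)\<^sup>2 / r"
    by (simp add: cnorm_power2 flip: complex_norm_square)
  moreover have "(cnorm L)\<^sup>2 \<le> (cnorm (L + t *\<^sub>C k))\<^sup>2"
    using assms cnorm_nonneg power_mono by blast
  ultimately have "(cmod c)\<^sup>2 / r \<le> 0"
    by simp
  then show ?thesis
    using r by (simp add: c_def divide_le_0_iff)
qed

lemma near_minimizers_cauchy:
  fixes X :: "nat \<Rightarrow> 'a::cinner_space"
  assumes midpoint: "\<And>a b. a \<in> S \<Longrightarrow> b \<in> S \<Longrightarrow> (1/2) *\<^sub>C (a + b) \<in> S"
    and lower: "\<And>z. z \<in> S \<Longrightarrow> D \<le> (cnorm z)\<^sup>2"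
    and X: "\<And>n. X n \<in> S" "\<And>n. (cnorm (X n))\<^sup>2 < D + inverse (real (Suc n))"
  shows "(cnorm (X m - X n))\<^sup>2 \<le> 2 * inverse (real (Suc m)) + 2 * inverse (real (Suc n))"
proof -
  have "D \<le> (cnorm ((1/2) *\<^sub>C (X m + X n)))\<^sup>2"
    using lower midpoint X(1) by blast
  then have "4 * D \<le> (cnorm (X m + X n))\<^sup>2"
    by (simp add: cnorm_cscale power_divide)
  then show ?thesis
    using parallelogram[of "X m" "X n"] X(2)[of m] X(2)[of n] by linarith
qed

lemma near_minimizers_converge:
  fixes X :: "nat \<Rightarrow> 'a::chilbert"
  assumes midpoint: "\<And>a b. a \<in> S \<Longrightarrow> b \<in> S \<Longrightarrow> (1/2) *\<^sub>C (a + b) \<in> S"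
    and lower: "\<And>z. z \<in> S \<Longrightarrow> D \<le> (cnorm z)\<^sup>2"
    and X: "\<And>n. X n \<in> S" "\<And>n. (cnorm (X n))\<^sup>2 < D + inverse (real (Suc n))"
  obtains L where "(\<lambda>n. cnorm (X n - L)) \<longlonglongrightarrow> 0"
proof -
  have "\<exists>N. \<forall>m\<ge>N. \<forall>n\<ge>N. cnorm (X m - X n) < e" if "e > 0" for e
  proof -
    obtain N where N: "inverse (real (Suc N)) < e\<^sup>2 / 4"
      using \<open>e > 0\<close> reals_Archimedean[of "e\<^sup>2 / 4"] by auto
    have "cnorm (X m - X n) < e" if "m \<ge> N" "n \<ge> N" for m n
    proof -
      have "inverse (real (Suc m)) \<le> inverse (real (Suc N))"
        "inverse (real (Suc n)) \<le> inverse (real (Suc N))"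
        using that by (simp_all add: le_imp_inverse_le)
      then have "(cnorm (X m - X n))\<^sup>2 < e\<^sup>2"
        using near_minimizers_cauchy[of S D X m n, OF midpoint lower X] N by linarith
      then show ?thesis
        using \<open>e > 0\<close> by (simp add: power_less_imp_less_base)
    qed
    then show ?thesis
      by blast
  qed
  then show ?thesis
    using cinner_complete[of X] that unfolding cnorm_def by blast
qed

lemma cnorm_power2_le_of_near_minimizers_limit:
  assumes L: "(\<lambda>n. cnorm (X n - L)) \<longlonglongrightarrow> 0"
    and X: "\<And>n. (cnorm (X n))\<^sup>2 < D + inverse (real (Suc n))"
  shows "(cnorm L)\<^sup>2 \<le> D"
proof -
  have "cnorm L \<le> sqrt (D + inverse (real (Suc n))) + cnorm (X n - L)" for n
  proof -
    have "cnorm (X n) \<le> sqrt (D + inverse (real (Suc n)))"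
      using X[of n] cnorm_nonneg real_le_rsqrt by (simp add: less_imp_le)
    then show ?thesis
      using cnorm_triangle[of "X n" "L - X n"] cnorm_minus_commute[of L "X n"] by simp
  qed
  moreover have "(\<lambda>n. sqrt (D + inverse (real (Suc n))) + cnorm (X n - L)) \<longlonglongrightarrow> sqrt (D + 0) + 0"
    by (intro tendsto_intros L LIMSEQ_inverse_real_of_nat)
  ultimately have "cnorm L \<le> sqrt D"
    using LIMSEQ_le_const[of _ "sqrt (D + 0) + 0" "cnorm L"] by force
  moreover have "0 \<le> D"
    using order_trans[OF cnorm_nonneg \<open>cnorm L \<le> sqrt D\<close>] by simp
  ultimately show ?thesis
    using power_mono[OF \<open>cnorm L \<le> sqrt D\<close> cnorm_nonneg, of 2] by simp
qed

lemma exists_min_cnorm_on_level_set: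
  fixes l :: "'a::chilbert \<Rightarrow> complex"
  assumes add: "\<And>x y. l (x + y) = l x + l y"
    and scale: "\<And>c x. l (c *\<^sub>C x) = c * l x"
    and bounded: "\<And>x. cmod (l x) \<le> K * cnorm x"
    and "l z\<^sub>1 = 1"
  shows "\<exists>L. l L = 1 \<and> (\<forall>z. l z = 1 \<longrightarrow> cnorm L \<le> cnorm z)"
proof -
  define S where "S = {z. l z = 1}"
  define D where "D = Inf ((\<lambda>z. (cnorm z)\<^sup>2) ` S)"
  have S_ne: "(\<lambda>z. (cnorm z)\<^sup>2) ` S \<noteq> {}"
    using \<open>l z\<^sub>1 = 1\<close> by (auto simp: S_def)
  have D_le: "D \<le> (cnorm z)\<^sup>2" if "z \<in> S" for z
    unfolding D_def using that by (auto intro!: cInf_lower bdd_belowI2[where m = 0])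
  have "\<exists>z\<in>S. (cnorm z)\<^sup>2 < D + inverse (real (Suc n))" for n
    using cInf_lessD[OF S_ne, of "D + inverse (real (Suc n))"] by (auto simp: D_def)
  then obtain X where X: "\<And>n. X n \<in> S" "\<And>n. (cnorm (X n))\<^sup>2 < D + inverse (real (Suc n))"
    by metis
  have midpoint: "(1/2) *\<^sub>C (a + b) \<in> S" if "a \<in> S" "b \<in> S" for a b
    using that by (simp add: S_def add scale)
  obtain L where L: "(\<lambda>n. cnorm (X n - L)) \<longlonglongrightarrow> 0"
    using near_minimizers_converge[of S D X, OF midpoint D_le X] by blast
  have "l L = 1"
  proof -
    have "cmod (1 - l L) \<le> K * cnorm (X n - L)" for n
    proof -
      have "l (X n - L) = 1 - l L"
        using add[of "X n - L" L] X(1)[of n] by (simp add: S_def eq_diff_eq)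
      then show ?thesis
        using bounded[of "X n - L"] by simp
    qed
    moreover have "(\<lambda>n. K * cnorm (X n - L)) \<longlonglongrightarrow> 0"
      using tendsto_mult_right_zero[OF L] .
    ultimately show ?thesis
      using LIMSEQ_le_const[of _ 0 "cmod (1 - l L)"] by force
  qed
  moreover have "cnorm L \<le> cnorm z" if "l z = 1" for z
  proof (rule power2_le_imp_le)
    show "(cnorm L)\<^sup>2 \<le> (cnorm z)\<^sup>2"
      using cnorm_power2_le_of_near_minimizers_limit[OF L X(2)] D_le[of z] that
      by (simp add: S_def)
  qed (simp add: cnorm_nonneg)
  ultimately show ?thesis
    by blast
qed

lemma riesz_representation:
  fixes l :: "'a::chilbert \<Rightarrow> complex"
  assumes add: "\<And>x y. l (x + y) = l x + l y"
    and scale: "\<And>c x. l (c *\<^sub>C x) = c * l x"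
    and bounded: "\<And>x. cmod (l x) \<le> K * cnorm x"
  shows "\<exists>v. \<forall>x. l x = cinner x v"
proof (cases "\<forall>x. l x = 0")
  case True
  then show ?thesis
    by (intro exI[of _ 0]) simp
next
  case False
  then obtain x\<^sub>0 where "l x\<^sub>0 \<noteq> 0"
    by auto
  then have "l ((1 / l x\<^sub>0) *\<^sub>C x\<^sub>0) = 1"
    by (simp add: scale)
  then obtain L where L: "l L = 1" and min: "\<And>z. l z = 1 \<Longrightarrow> cnorm L \<le> cnorm z"
    using exists_min_cnorm_on_level_set[OF add scale bounded] by blast
  have orth: "cinner k L = 0" if "l k = 0" for k
  proof (rule cnorm_le_cnorm_add_cscale_imp_orthogonal)
    fix t
    have "l (L + t *\<^sub>C k) = 1"
      using L that by (simp add: add scale)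
    then show "cnorm L \<le> cnorm (L + t *\<^sub>C k)"
      by (rule min)
  qed
  have "L \<noteq> 0"
    using L scale[of 0 L] by auto
  then have L_pos: "(cnorm L)\<^sup>2 \<noteq> 0"
    by simp
  show ?thesis
  proof (intro exI allI)
    fix x
    have "l (x - l x *\<^sub>C L) = 0"
      using add[of "x - l x *\<^sub>C L" "l x *\<^sub>C L"] by (simp add: scale L)
    then have "cinner (x - l x *\<^sub>C L) L = 0"
      by (rule orth)
    then have "cinner x L = l x * complex_of_real ((cnorm L)\<^sup>2)"
      by (simp add: cinner_diff_left cinner_cscale_left cinner_self_eq_cnorm_sq[of L])
    then show "l x = cinner x (complex_of_real (1 / (cnorm L)\<^sup>2) *\<^sub>C L)"
      using L_pos by (simp add: cinner_cscale_right field_simps)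
  qed
qed

lemma cinner_representer_exists:
  fixes \<phi> :: "'a::chilbert \<Rightarrow> 'b::cinner_space"
  assumes "cbounded_linear \<phi>"
  shows "\<exists>v. \<forall>z. cinner v z = cinner x (\<phi> z)"
proof -
  obtain K where lin: "clinear \<phi>" and K: "\<And>z. cnorm (\<phi> z) \<le> K * cnorm z"
    using assms unfolding cbounded_linear_def by blast
  have "\<exists>v. \<forall>z. cinner (\<phi> z) x = cinner z v"
  proof (rule riesz_representation)
    fix z
    have "cmod (cinner (\<phi> z) x) \<le> cnorm (\<phi> z) * cnorm x"
      by (rule cauchy_schwarz)
    also have "\<dots> \<le> K * cnorm z * cnorm x"
      using K cnorm_nonneg mult_right_mono by blast
    finally show "cmod (cinner (\<phi> z) x) \<le> K * cnorm x * cnorm z"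
      by (simp add: algebra_simps)
  qed (use lin in \<open>simp_all add: clinear_def cinner_add_left cinner_cscale_left\<close>)
  then obtain v where v: "\<And>z. cinner (\<phi> z) x = cinner z v"
    by blast
  have "cinner v z = cinner x (\<phi> z)" for z
    using cinner_commute[of v z] cinner_commute[of x "\<phi> z"] v[of z] by simp
  then show ?thesis
    by blast
qed

lemma the_cinner_representer:
  assumes "\<forall>z. cinner (v::'a::cinner_space) z = F z"
  shows "(THE v. \<forall>z. cinner v z = F z) = v"
proof (rule the_equality)
  fix w assume "\<forall>z. cinner w z = F z"
  then show "w = v"
    using assms by (intro cinner_ext) simp
qed (rule assms)

lemma cinner_cadj:
  fixes B :: "'a::chilbert \<Rightarrow> 'b::cinner_space"
  assumes "cbounded_linear B"
  shows "cinner (B x) y = cinner x (cadj B y)"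
proof -
  obtain S where S: "\<And>y x. cinner (S y) x = cinner y (B x)"
    using cinner_representer_exists[OF assms] by metis
  have S': "cinner (B x) y = cinner x (S y)" for x y
    using cinner_commute[of "S y" x] cinner_commute[of y "B x"] S[of y x] by simp
  have "cadj B = S"
    unfolding cadj_def
  proof (rule the_equality)
    show "\<forall>x y. cinner (B x) y = cinner x (S y)"
      using S' by blast
    fix S\<^sub>1 assume S\<^sub>1: "\<forall>x y. cinner (B x) y = cinner x (S\<^sub>1 y)"
    show "S\<^sub>1 = S"
    proof
      fix y
      have "cinner (S\<^sub>1 y) x = cinner (S y) x" for x
        using S\<^sub>1 S' cinner_commute[of "S\<^sub>1 y" x] cinner_commute[of "S y" x] by simp
      then show "S\<^sub>1 y = S y"
        by (rule cinner_ext)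
    qed
  qed
  then show ?thesis
    using S' by simp
qed

lemma cinner_cadj':
  fixes B :: "'a::chilbert \<Rightarrow> 'b::cinner_space"
  assumes "cbounded_linear B"
  shows "cinner y (B x) = cinner (cadj B y) x"
  using cinner_cadj[OF assms, of x y] cinner_commute[of y "B x"] cinner_commute[of "cadj B y" x]
  by simp

section \<open>Defect spaces and the Weyl function\<close>

lemma N_plus_iff: "a \<in> N_plus T \<mu> \<longleftrightarrow> snd a = \<mu> *\<^sub>C fst a \<and> a \<in> kperp (A_rel T)"
  by (cases a) (auto simp: N_plus_def)

lemma N_minus_iff: "a \<in> N_minus T \<mu> \<longleftrightarrow> fst a = \<mu> *\<^sub>C snd a \<and> a \<in> kperp (A_rel T)"
  by (cases a) (auto simp: N_minus_def)

lemma kperp_padd: "a \<in> kperp S \<Longrightarrow> b \<in> kperp S \<Longrightarrow> padd a b \<in> kperp S"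
  by (simp add: kperp_def kform_def padd_def cinner_add_left algebra_simps)

lemma kperp_pscale: "a \<in> kperp S \<Longrightarrow> pscale c a \<in> kperp S"
  by (simp add: kperp_def kform_def pscale_def cinner_cscale_left
      flip: mult.left_commute right_diff_distrib)

lemma N_plus_padd: "a \<in> N_plus T \<mu> \<Longrightarrow> b \<in> N_plus T \<mu> \<Longrightarrow> padd a b \<in> N_plus T \<mu>"
  by (simp add: N_plus_iff kperp_padd) (simp add: padd_def cscale_add_right)

lemma N_plus_pscale: "a \<in> N_plus T \<mu> \<Longrightarrow> pscale c a \<in> N_plus T \<mu>"
  by (simp add: N_plus_iff kperp_pscale) (simp add: pscale_def cscale_cscale mult.commute)

lemma N_minus_padd: "a \<in> N_minus T \<mu> \<Longrightarrow> b \<in> N_minus T \<mu> \<Longrightarrow> padd a b \<in> N_minus T \<mu>"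
  by (simp add: N_minus_iff kperp_padd) (simp add: padd_def cscale_add_right)

lemma N_minus_pscale: "a \<in> N_minus T \<mu> \<Longrightarrow> pscale c a \<in> N_minus T \<mu>"
  by (simp add: N_minus_iff kperp_pscale) (simp add: pscale_def cscale_cscale mult.commute)

lemma kform_eq: "kform a b = \<i> * (cinner (fst a) (fst b) - cinner (snd a) (snd b))"
  by (simp add: kform_def right_diff_distrib)

lemma the_preimage_eq:
  assumes "bij_betw G N UNIV" "a \<in> N" "G a = u"
  shows "(THE a. a \<in> N \<and> G a = u) = a"
  using assms by (auto simp: bij_betw_def inj_on_def)

lemma the_preimage:
  assumes "bij_betw G N UNIV"
  shows "(THE a. a \<in> N \<and> G a = u) \<in> N" "G (THE a. a \<in> N \<and> G a = u) = u"
proof -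
  obtain a where "a \<in> N" "G a = u"
    using assms by (metis UNIV_I bij_betw_def imageE)
  then show "(THE a. a \<in> N \<and> G a = u) \<in> N" "G (THE a. a \<in> N \<and> G a = u) = u"
    using the_preimage_eq[OF assms] by simp_all
qed

locale boundary_weyl =
  fixes T :: "'h::chilbert \<Rightarrow> 'h"
    and Gp :: "'h \<times> 'h \<Rightarrow> 'p::chilbert"
    and Gm :: "'h \<times> 'h \<Rightarrow> 'm::chilbert"
    and B :: "complex \<Rightarrow> 'p \<Rightarrow> 'm"
  assumes boundary: "boundary_quadruple T Gp Gm"
    and weyl: "contractive_weyl_function T Gp Gm B"
begin

lemma boundary_padd:
  assumes "a \<in> kperp (A_rel T)" "b \<in> kperp (A_rel T)"
  shows "Gp (padd a b) = Gp a + Gp b" "Gm (padd a b) = Gm a + Gm b"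
  using boundary assms unfolding boundary_quadruple_def by blast+

lemma boundary_pscale:
  assumes "a \<in> kperp (A_rel T)"
  shows "Gp (pscale c a) = c *\<^sub>C Gp a" "Gm (pscale c a) = c *\<^sub>C Gm a"
  using boundary assms unfolding boundary_quadruple_def by blast+

lemma green_identity:
  assumes "a \<in> kperp (A_rel T)" "b \<in> kperp (A_rel T)"
  shows "cinner (fst a) (fst b) - cinner (snd a) (snd b) = cinner (Gp a) (Gp b) - cinner (Gm a) (Gm b)"
proof -
  have "kform a b = \<i> * (cinner (Gp a) (Gp b) - cinner (Gm a) (Gm b))"
    using boundary assms unfolding boundary_quadruple_def by (simp add: right_diff_distrib)
  then show ?thesis
    by (simp add: kform_eq)
qed

lemma green_identity_self:
  assumes "a \<in> kperp (A_rel T)"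
  shows "(cnorm (fst a))\<^sup>2 - (cnorm (snd a))\<^sup>2 = (cnorm (Gp a))\<^sup>2 - (cnorm (Gm a))\<^sup>2"
  using arg_cong[OF green_identity[OF assms assms], of Re] by (simp add: cnorm_power2)

lemma
  assumes "cmod \<mu> < 1"
  shows bounded_linear_B: "cbounded_linear (B \<mu>)"
    and bij_betw_Gp_N_plus: "bij_betw Gp (N_plus T \<mu>) UNIV"
    and bij_betw_Gm_N_minus: "bij_betw Gm (N_minus T \<mu>) UNIV"
    and Gm_N_plus: "a \<in> N_plus T \<mu> \<Longrightarrow> Gm a = B \<mu> (Gp a)"
    and Gp_N_minus: "b \<in> N_minus T \<mu> \<Longrightarrow> Gp b = cadj (B (cnj \<mu>)) (Gm b)"
  using weyl assms by (simp_all add: contractive_weyl_function_def cstrict_contraction_def)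

lemma
  assumes "cmod \<mu> < 1"
  shows gamma_plus_mem: "gamma_plus T Gp \<mu> u \<in> N_plus T \<mu>"
    and Gp_gamma_plus: "Gp (gamma_plus T Gp \<mu> u) = u"
  unfolding gamma_plus_def by (rule the_preimage[OF bij_betw_Gp_N_plus[OF assms]])+

lemma gamma_plus_kperp: "cmod \<mu> < 1 \<Longrightarrow> gamma_plus T Gp \<mu> u \<in> kperp (A_rel T)"
  using gamma_plus_mem N_plus_iff by blast

lemma Gm_gamma_plus: "cmod \<mu> < 1 \<Longrightarrow> Gm (gamma_plus T Gp \<mu> u) = B \<mu> u"
  by (simp add: Gm_N_plus gamma_plus_mem Gp_gamma_plus)

lemma gamma_plus_eqI:
  "cmod \<mu> < 1 \<Longrightarrow> a \<in> N_plus T \<mu> \<Longrightarrow> Gp a = u \<Longrightarrow> gamma_plus T Gp \<mu> u = a"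
  unfolding gamma_plus_def by (rule the_preimage_eq[OF bij_betw_Gp_N_plus])

lemma
  assumes "cmod \<mu> < 1"
  shows gamma_minus_mem: "gamma_minus T Gm \<mu> u \<in> N_minus T \<mu>"
    and Gm_gamma_minus: "Gm (gamma_minus T Gm \<mu> u) = u"
  unfolding gamma_minus_def by (rule the_preimage[OF bij_betw_Gm_N_minus[OF assms]])+

lemma gamma_minus_kperp: "cmod \<mu> < 1 \<Longrightarrow> gamma_minus T Gm \<mu> u \<in> kperp (A_rel T)"
  using gamma_minus_mem N_minus_iff by blast

lemma Gp_gamma_minus: "cmod \<mu> < 1 \<Longrightarrow> Gp (gamma_minus T Gm \<mu> u) = cadj (B (cnj \<mu>)) u"
  by (simp add: Gp_N_minus gamma_minus_mem Gm_gamma_minus)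

lemma gamma_minus_eqI:
  "cmod \<mu> < 1 \<Longrightarrow> a \<in> N_minus T \<mu> \<Longrightarrow> Gm a = u \<Longrightarrow> gamma_minus T Gm \<mu> u = a"
  unfolding gamma_minus_def by (rule the_preimage_eq[OF bij_betw_Gm_N_minus])

lemma gamma_plus_padd:
  assumes "cmod \<mu> < 1"
  shows "gamma_plus T Gp \<mu> (u + v) = padd (gamma_plus T Gp \<mu> u) (gamma_plus T Gp \<mu> v)"
  by (rule gamma_plus_eqI[OF assms])
    (simp_all add: N_plus_padd gamma_plus_mem[OF assms] boundary_padd gamma_plus_kperp[OF assms]
      Gp_gamma_plus[OF assms])

lemma gamma_plus_pscale:
  assumes "cmod \<mu> < 1"
  shows "gamma_plus T Gp \<mu> (c *\<^sub>C u) = pscale c (gamma_plus T Gp \<mu> u)"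
  by (rule gamma_plus_eqI[OF assms])
    (simp_all add: N_plus_pscale gamma_plus_mem[OF assms] boundary_pscale gamma_plus_kperp[OF assms]
      Gp_gamma_plus[OF assms])

lemma gamma_minus_padd:
  assumes "cmod \<mu> < 1"
  shows "gamma_minus T Gm \<mu> (u + v) = padd (gamma_minus T Gm \<mu> u) (gamma_minus T Gm \<mu> v)"
  by (rule gamma_minus_eqI[OF assms])
    (simp_all add: N_minus_padd gamma_minus_mem[OF assms] boundary_padd gamma_minus_kperp[OF assms]
      Gm_gamma_minus[OF assms])

lemma gamma_minus_pscale:
  assumes "cmod \<mu> < 1"
  shows "gamma_minus T Gm \<mu> (c *\<^sub>C u) = pscale c (gamma_minus T Gm \<mu> u)"
  by (rule gamma_minus_eqI[OF assms])
    (simp_all add: N_minus_pscale gamma_minus_mem[OF assms] boundary_pscale gamma_minus_kperp[OF assms]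
      Gm_gamma_minus[OF assms])

lemma bounded_linear_phi_plus:
  assumes "cmod \<mu> < 1"
  shows "cbounded_linear (phi_plus T Gp \<mu>)"
  unfolding cbounded_linear_def clinear_def
proof (intro conjI allI exI)
  show "phi_plus T Gp \<mu> (u + v) = phi_plus T Gp \<mu> u + phi_plus T Gp \<mu> v" for u v
    by (simp add: phi_plus_def gamma_plus_padd[OF assms] padd_def)
  show "phi_plus T Gp \<mu> (c *\<^sub>C u) = c *\<^sub>C phi_plus T Gp \<mu> u" for c u
    by (simp add: phi_plus_def gamma_plus_pscale[OF assms] pscale_def)
  show "cnorm (phi_plus T Gp \<mu> u) \<le> (1 / sqrt (1 - (cmod \<mu>)\<^sup>2)) * cnorm u" for u
  proof -
    define b where "b = gamma_plus T Gp \<mu> u"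
    have "snd b = \<mu> *\<^sub>C fst b" "b \<in> kperp (A_rel T)"
      using gamma_plus_mem[OF assms] by (simp_all add: b_def N_plus_iff)
    then have "(1 - (cmod \<mu>)\<^sup>2) * (cnorm (fst b))\<^sup>2 = (cnorm u)\<^sup>2 - (cnorm (Gm b))\<^sup>2"
      using green_identity_self[of b]
      by (simp add: b_def Gp_gamma_plus[OF assms] cnorm_cscale power_mult_distrib algebra_simps)
    then have "(1 - (cmod \<mu>)\<^sup>2) * (cnorm (fst b))\<^sup>2 \<le> (cnorm u)\<^sup>2"
      by simp
    then show ?thesis
      using assms le_divide_sqrt_if_mult_power2_le[of "1 - (cmod \<mu>)\<^sup>2" "cnorm u"]
      by (simp add: b_def phi_plus_def cnorm_nonneg abs_square_less_1)
  qed
qed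

lemma bounded_linear_phi_minus:
  assumes "cmod \<mu> < 1"
  shows "cbounded_linear (phi_minus T Gm \<mu>)"
  unfolding cbounded_linear_def clinear_def
proof (intro conjI allI exI)
  show "phi_minus T Gm \<mu> (u + v) = phi_minus T Gm \<mu> u + phi_minus T Gm \<mu> v" for u v
    by (simp add: phi_minus_def gamma_minus_padd[OF assms] padd_def)
  show "phi_minus T Gm \<mu> (c *\<^sub>C u) = c *\<^sub>C phi_minus T Gm \<mu> u" for c u
    by (simp add: phi_minus_def gamma_minus_pscale[OF assms] pscale_def)
  show "cnorm (phi_minus T Gm \<mu> u) \<le> (1 / sqrt (1 - (cmod \<mu>)\<^sup>2)) * cnorm u" for u
  proof -
    define b where "b = gamma_minus T Gm \<mu> u"
    have "fst b = \<mu> *\<^sub>C snd b" "b \<in> kperp (A_rel T)"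
      using gamma_minus_mem[OF assms] by (simp_all add: b_def N_minus_iff)
    then have "(1 - (cmod \<mu>)\<^sup>2) * (cnorm (snd b))\<^sup>2 = (cnorm u)\<^sup>2 - (cnorm (Gp b))\<^sup>2"
      using green_identity_self[of b]
      by (simp add: b_def Gm_gamma_minus[OF assms] cnorm_cscale power_mult_distrib algebra_simps)
    then have "(1 - (cmod \<mu>)\<^sup>2) * (cnorm (snd b))\<^sup>2 \<le> (cnorm u)\<^sup>2"
      by simp
    then show ?thesis
      using assms le_divide_sqrt_if_mult_power2_le[of "1 - (cmod \<mu>)\<^sup>2" "cnorm u"]
      by (simp add: b_def phi_minus_def cnorm_nonneg abs_square_less_1)
  qed
qed

lemma cinner_f_sec_plus_hat:
  assumes "cmod lam < 1"
  shows "cinner (f_sec_plus T Gm (hat x) lam) z = cinner x (phi_minus T Gm (cnj lam) z)"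
proof -
  obtain v where v: "\<forall>z. cinner v z = cinner x (phi_minus T Gm (cnj lam) z)"
    using cinner_representer_exists[OF bounded_linear_phi_minus] assms by fastforce
  have "f_sec_plus T Gm (hat x) lam = v"
    unfolding f_sec_plus_def phi_minus_dag_def hat_def using v by (rule the_cinner_representer)
  then show ?thesis
    using v by simp
qed

lemma cinner_f_sec_minus_hat:
  assumes "cmod lam < 1"
  shows "cinner (f_sec_minus T Gp (hat x) lam) z = cinner x (phi_plus T Gp (cnj lam) z)"
proof -
  obtain v where v: "\<forall>z. cinner v z = cinner x (phi_plus T Gp (cnj lam) z)"
    using cinner_representer_exists[OF bounded_linear_phi_plus] assms by fastforce
  have "f_sec_minus T Gp (hat x) lam = v"
    unfolding f_sec_minus_def phi_plus_dag_def hat_def using v by (rule the_cinner_representer)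
  then show ?thesis
    using v by simp
qed

lemma f_sec_plus_hat_diff:
  assumes a: "(x, y) \<in> kperp (A_rel T)" and "cmod lam < 1"
  shows "lam *\<^sub>C f_sec_plus T Gm (hat x) lam - f_sec_plus T Gm (hat y) lam
    = B lam (Gp (x, y)) - Gm (x, y)"
proof (rule cinner_ext)
  fix z
  have \<mu>: "cmod (cnj lam) < 1"
    using assms by simp
  define b where "b = gamma_minus T Gm (cnj lam) z"
  have b: "b = (cnj lam *\<^sub>C phi_minus T Gm (cnj lam) z, phi_minus T Gm (cnj lam) z)"
    using gamma_minus_mem[OF \<mu>] by (simp add: b_def phi_minus_def N_minus_iff prod_eq_iff)
  have "cinner (lam *\<^sub>C f_sec_plus T Gm (hat x) lam - f_sec_plus T Gm (hat y) lam) z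
      = cinner (fst (x, y)) (fst b) - cinner (snd (x, y)) (snd b)"
    by (simp add: b cinner_diff_left cinner_cscale_left cinner_cscale_right
        cinner_f_sec_plus_hat[OF \<open>cmod lam < 1\<close>])
  also have "\<dots> = cinner (Gp (x, y)) (Gp b) - cinner (Gm (x, y)) (Gm b)"
    unfolding b_def by (rule green_identity[OF a gamma_minus_kperp[OF \<mu>]])
  also have "\<dots> = cinner (B lam (Gp (x, y)) - Gm (x, y)) z"
    by (simp add: b_def Gp_gamma_minus[OF \<mu>] Gm_gamma_minus[OF \<mu>] cinner_diff_left
        cinner_cadj[OF bounded_linear_B[OF \<open>cmod lam < 1\<close>]])
  finally show "cinner (lam *\<^sub>C f_sec_plus T Gm (hat x) lam - f_sec_plus T Gm (hat y) lam) z
      = cinner (B lam (Gp (x, y)) - Gm (x, y)) z" .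
qed

lemma f_sec_minus_hat_diff:
  assumes a: "(x, y) \<in> kperp (A_rel T)" and "cmod lam < 1"
  shows "f_sec_minus T Gp (hat x) lam - lam *\<^sub>C f_sec_minus T Gp (hat y) lam
    = Gp (x, y) - cadj (B (cnj lam)) (Gm (x, y))"
proof (rule cinner_ext)
  fix z
  have \<mu>: "cmod (cnj lam) < 1"
    using assms by simp
  define b where "b = gamma_plus T Gp (cnj lam) z"
  have b: "b = (phi_plus T Gp (cnj lam) z, cnj lam *\<^sub>C phi_plus T Gp (cnj lam) z)"
    using gamma_plus_mem[OF \<mu>] by (simp add: b_def phi_plus_def N_plus_iff prod_eq_iff)
  have "cinner (f_sec_minus T Gp (hat x) lam - lam *\<^sub>C f_sec_minus T Gp (hat y) lam) z
      = cinner (fst (x, y)) (fst b) - cinner (snd (x, y)) (snd b)"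
    by (simp add: b cinner_diff_left cinner_cscale_left cinner_cscale_right
        cinner_f_sec_minus_hat[OF \<open>cmod lam < 1\<close>])
  also have "\<dots> = cinner (Gp (x, y)) (Gp b) - cinner (Gm (x, y)) (Gm b)"
    unfolding b_def by (rule green_identity[OF a gamma_plus_kperp[OF \<mu>]])
  also have "\<dots> = cinner (Gp (x, y) - cadj (B (cnj lam)) (Gm (x, y))) z"
    by (simp add: b_def Gp_gamma_plus[OF \<mu>] Gm_gamma_plus[OF \<mu>] cinner_diff_left
        cinner_cadj'[OF bounded_linear_B[OF \<mu>]])
  finally show "cinner (f_sec_minus T Gp (hat x) lam - lam *\<^sub>C f_sec_minus T Gp (hat y) lam) z
      = cinner (Gp (x, y) - cadj (B (cnj lam)) (Gm (x, y))) z" .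
qed

end

theorem theorem4p14:
  fixes T :: "'h::chilbert \<Rightarrow> 'h"
    and Gp :: "'h \<times> 'h \<Rightarrow> 'p::chilbert"
    and Gm :: "'h \<times> 'h \<Rightarrow> 'm::chilbert"
    and B :: "complex \<Rightarrow> 'p \<Rightarrow> 'm"
    and x y :: 'h
  assumes "separable_space TYPE('h)"
    and "infinite_dimensional TYPE('h)"
    and "ccontraction T"
    and "completely_non_unitary T"
    and "boundary_quadruple T Gp Gm"
    and "contractive_weyl_function T Gp Gm B"
    and "(x, y) \<in> kperp (A_rel T)"
  shows "(\<forall>lam. cmod lam < 1 \<longrightarrow>
            lam *\<^sub>C f_sec_plus T Gm (hat x) lam - f_sec_plus T Gm (hat y) lam
              = B lam (Gp (x, y)) - Gm (x, y))
       \<and> (\<forall>lam. cmod lam < 1 \<longrightarrow>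
            f_sec_minus T Gp (hat x) lam - lam *\<^sub>C f_sec_minus T Gp (hat y) lam
              = Gp (x, y) - cadj (B (cnj lam)) (Gm (x, y)))"
proof -
  interpret boundary_weyl T Gp Gm B
    using assms(5,6) by unfold_locales
  show ?thesis
    using f_sec_plus_hat_diff[OF assms(7)] f_sec_minus_hat_diff[OF assms(7)] by blast
qed

end
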